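(* Let $\mathbf P_N(z)=\begin{pmatrix}P_N(z)& C(w_NP_N)(z)\\ h_{N-1}^{-1}P_{N-1}(z)& h_{N-1}^{-1}C(w_NP_{N-1})(z)\end{pmatrix}$, $\Pi(z)=\frac{\sin(N\pi z)}{N\pi}$, and for $|\Im z|<\epsilon_0$ define \[ \mathbf D^u_\pm(z)=\begin{pmatrix}1&-\frac{w_N(z)}{\Pi(z)}e^{\pm iN\pi z}\\0&1\end{pmatrix},\qquad \mathbf D^l_\pm(z)=\begin{pmatrix}\Pi(z)^{-1}&0\\-\frac{1}{w_N(z)}e^{\pm iN\pi z}&\Pi(z)\end{pmatrix}, \] and $\mathbf R^u_N(z)=\mathbf P_N(z)\mathbf D^u_+(z)$, $\mathbf R^l_N(z)=\mathbf P_N(z)\mathbf D^l_+(z)$ for $\Im z\ge0$, and $\mathbf R^u_N(z)=\mathbf P_N(z)\mathbf D^u_-(z)$, $\mathbf R^l_N(z)=\mathbf P_N(z)\mathbf D^l_-(z)$ for $\Im z\le0$ (two-valued on $\mathbb R$). Then $\mathbf R^u_N$ and $\mathbf R^l_N$ have no poles (all apparent singularities at points of $L_N$ are removable, on each of the closed upper and lower half-strips), and for $x\in\mathbb R$, with $+$ / $-$ denoting the values from the upper / lower half-plane, \[ \mathbf R^u_{N+}(x)=\mathbf R^u_{N-}(x)\begin{pmatrix}1&-2N\pi i\,w_N(x)\\0&1\end{pmatrix},\qquad \mathbf R^l_{N+}(x)=\mathbf R^l_{N-}(x)\begin{pmatrix}1&0\\-\frac{2N\pi i}{w_N(x)}&1\end{pmatrix}.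 \]
   Context: Let $V$ be a real-valued real analytic function on $\mathbb R$ with an analytic extension to the strip $\{|\Im z|<\epsilon_0\}$, $\epsilon_0>0$, satisfying $\Re V(z)/\log(|z|^2+1)\to+\infty$ as $|z|\to\infty$ in the strip. Fix $N\in\mathbb N$, let $L_N=\{k/N:k\in\mathbb Z\}$ and $w_N(z)=e^{-NV(z)}$. Let $P_n$ be the monic polynomials of degree $n$ with $\sum_{x\in L_N}P_m(x)P_n(x)w_N(x)=h_n\delta_{mn}$. For a function $f$ on $L_N$, $C(f)(z)=\sum_{x\in L_N}\frac{f(x)}{z-x}$. *)

theory Defs
  imports "HOL-Analysis.Analysis" "HOL-Computational_Algebra.Polynomial"
begin

definition mat2 :: "'a \<Rightarrow> 'a \<Rightarrow> 'a \<Rightarrow> 'a \<Rightarrow> 'a^2^2" where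
  "mat2 a b c d = (\<chi> i j. if i = 1 then (if j = 1 then a else b) else (if j = 1 then c else d))"

definition strip :: "real \<Rightarrow> complex set" where
  "strip e = {z. \<bar>Im z\<bar> < e}"

definition latN :: "nat \<Rightarrow> complex set" where
  "latN N = {of_int k / of_nat N | k. True}"

definition cpoly :: "real poly \<Rightarrow> complex poly" where
  "cpoly p = map_poly of_real p"

definition wN :: "nat \<Rightarrow> (complex \<Rightarrow> complex) \<Rightarrow> complex \<Rightarrow> complex" where
  "wN N V z = exp (- of_nat N * V z)"

definition cauchy_tr :: "nat \<Rightarrow> (complex \<Rightarrow> complex) \<Rightarrow> complex \<Rightarrow> complex" where
  "cauchy_tr N f z = (\<Sum>\<^sub>\<infinity>x\<in>latN N. f x / (z - x))"

definition PiN :: "nat \<Rightarrow> complex \<Rightarrow> complex" where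
  "PiN N z = sin (of_nat N * of_real pi * z) / (of_nat N * of_real pi)"

definition bigP :: "nat \<Rightarrow> (complex \<Rightarrow> complex) \<Rightarrow> (nat \<Rightarrow> real poly) \<Rightarrow> (nat \<Rightarrow> real)
    \<Rightarrow> complex \<Rightarrow> complex^2^2" where
  "bigP N V P h z = mat2
     (poly (cpoly (P N)) z)
     (cauchy_tr N (\<lambda>x. wN N V x * poly (cpoly (P N)) x) z)
     (poly (cpoly (P (N - 1))) z / of_real (h (N - 1)))
     (cauchy_tr N (\<lambda>x. wN N V x * poly (cpoly (P (N - 1))) x) z / of_real (h (N - 1)))"

text \<open>D^u_sigma and D^l_sigma, sigma = 1 for +, sigma = -1 for -.\<close>
definition Du :: "nat \<Rightarrow> (complex \<Rightarrow> complex) \<Rightarrow> real \<Rightarrow> complex \<Rightarrow> complex^2^2" where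
  "Du N V \<sigma> z = mat2 1
     (- (wN N V z / PiN N z) * exp (of_real \<sigma> * \<i> * of_nat N * of_real pi * z)) 0 1"

definition Dl :: "nat \<Rightarrow> (complex \<Rightarrow> complex) \<Rightarrow> real \<Rightarrow> complex \<Rightarrow> complex^2^2" where
  "Dl N V \<sigma> z = mat2 (1 / PiN N z) 0
     (- (1 / wN N V z) * exp (of_real \<sigma> * \<i> * of_nat N * of_real pi * z)) (PiN N z)"

definition mat_holomorphic_on :: "(complex \<Rightarrow> complex^2^2) \<Rightarrow> complex set \<Rightarrow> bool" where
  "mat_holomorphic_on F S = (\<forall>i j. (\<lambda>z. F z $ i $ j) holomorphic_on S)"

end

theory Submission
  imports Defs "HOL-Complex_Analysis.Complex_Analysis"
begin

text \<open>Off the lattice \<open>L_N\<close> every entry of \<open>P_N D\<close> is analytic, so only the points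
  \<open>x0 \<in> L_N\<close> matter. There the Cauchy transform \<open>C(w \<alpha>)\<close> has a simple pole with residue
  \<open>w(x0) \<alpha>(x0)\<close>, and \<open>1/\<Pi>\<close> has a simple pole with residue \<open>cos (N \<pi> x0) = e^{\<plusminus>i N \<pi> x0} = \<plusminus>1\<close>.
  In every entry of \<open>P_N D^u_\<plusminus>\<close> and \<open>P_N D^l_\<plusminus>\<close> these residues cancel, so all singularities are
  removable and \<open>remove_sings\<close> yields the holomorphic continuations. The jump relations come from
  \<open>e^{i N \<pi> z} - e^{-i N \<pi> z} = 2 i sin (N \<pi> z)\<close> off the lattice and extend to the lattice points
  by continuity.\<close>

no_notation fps_nth (infixl \<open>$\<close> 75)

lemma mat2_nth:
  "mat2 a b c d $ i $ j = (if i = 1 then (if j = 1 then a else b) else (if j = 1 then c else d))"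
  by (simp add: mat2_def)

lemma mat2_mult:
  "mat2 a b c d ** mat2 a' b' c' d' = mat2 (a*a' + b*c') (a*b' + b*d') (c*a' + d*c') (c*b' + d*d')"
  unfolding vec_eq_iff forall_2 by (simp add: mat2_nth matrix_matrix_mult_def sum_2)

lemma mat2_mult_nth:
  "(mat2 a b c d ** M) $ i $ j =
     (if i = 1 then a * M $ 1 $ j + b * M $ 2 $ j else c * M $ 1 $ j + d * M $ 2 $ j)"
  by (simp add: mat2_nth matrix_matrix_mult_def sum_2)

lemma continuous_on_mat2_nth:
  assumes "continuous_on S a" "continuous_on S b" "continuous_on S c" "continuous_on S d"
  shows "continuous_on S (\<lambda>z. mat2 (a z) (b z) (c z) (d z) $ i $ j)"
  using assms by (cases "i = 1"; cases "j = 1") (simp_all add: mat2_nth)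

section \<open>Simple poles\<close>

text \<open>The case \<open>r = 0\<close> covers points of analyticity and removable singularities.\<close>
definition has_simple_pole_residue :: "(complex \<Rightarrow> complex) \<Rightarrow> complex \<Rightarrow> complex \<Rightarrow> bool" where
  "has_simple_pole_residue f z r \<longleftrightarrow>
     (\<exists>g. g analytic_on {z} \<and> (\<forall>\<^sub>F w in at z. f w = g w + r / (w - z)))"

lemma has_simple_pole_residue_cong:
  assumes "has_simple_pole_residue f z r" "\<forall>\<^sub>F w in at z. f w = g w"
  shows "has_simple_pole_residue g z r"
proof -
  obtain f' where "f' analytic_on {z}" "\<forall>\<^sub>F w in at z. f w = f' w + r / (w - z)"
    using assms(1) unfolding has_simple_pole_residue_def by blast
  moreover have "\<forall>\<^sub>F w in at z. g w = f' w + r / (w - z)"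
    using assms(2) calculation(2) by eventually_elim simp
  ultimately show ?thesis
    unfolding has_simple_pole_residue_def by blast
qed

lemma analytic_imp_has_simple_pole_residue:
  "f analytic_on {z} \<Longrightarrow> has_simple_pole_residue f z 0"
  unfolding has_simple_pole_residue_def by auto

lemma has_simple_pole_residue_inverse_linear: "has_simple_pole_residue (\<lambda>w. 1 / (w - z)) z 1"
  unfolding has_simple_pole_residue_def by (intro exI[of _ "\<lambda>_. 0"]) auto

lemma has_simple_pole_residue_add:
  assumes "has_simple_pole_residue f z r" "has_simple_pole_residue g z s"
  shows "has_simple_pole_residue (\<lambda>w. f w + g w) z (r + s)"
proof -
  obtain f' g' where "f' analytic_on {z}" "g' analytic_on {z}"
    and "\<forall>\<^sub>F w in at z. f w = f' w + r / (w - z)" "\<forall>\<^sub>F w in at z. g w = g' w + s / (w - z)"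
    using assms unfolding has_simple_pole_residue_def by blast
  then show ?thesis
    unfolding has_simple_pole_residue_def
    by (intro exI[of _ "\<lambda>w. f' w + g' w"] conjI analytic_intros)
       (auto elim: eventually_elim2 simp: add_divide_distrib)
qed

lemma analytic_at_difference_quotient:
  assumes "g analytic_on {z}"
  shows "(\<lambda>w. if w = z then deriv g z else (g w - g z) / (w - z)) analytic_on {z}"
proof -
  obtain e where "e > 0" "g holomorphic_on ball z e"
    using assms analytic_at_ball by blast
  then show ?thesis
    by (intro holomorphic_on_imp_analytic_at[of _ "ball z e"] pole_lemma_open) auto
qed

lemma has_simple_pole_residue_mult:
  assumes g: "g analytic_on {z}" and f: "has_simple_pole_residue f z r"
  shows "has_simple_pole_residue (\<lambda>w. g w * f w) z (g z * r)"
proof -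
  obtain f' where f': "f' analytic_on {z}" "\<forall>\<^sub>F w in at z. f w = f' w + r / (w - z)"
    using f unfolding has_simple_pole_residue_def by blast
  define q where "q w = (if w = z then deriv g z else (g w - g z) / (w - z))" for w
  have q: "q analytic_on {z}"
    unfolding q_def by (rule analytic_at_difference_quotient[OF g])
  have split: "g w * (f' w + r / (w - z)) = (g w * f' w + r * q w) + g z * r / (w - z)"
    if "w \<noteq> z" for w
  proof -
    have "g w / (w - z) = q w + g z / (w - z)"
      using that by (simp add: q_def diff_divide_distrib)
    then have "r * (g w / (w - z)) = r * q w + g z * r / (w - z)"
      by (simp add: algebra_simps)
    then show ?thesis
      by (simp add: algebra_simps)
  qed
  have "\<forall>\<^sub>F w in at z. g w * f w = (g w * f' w + r * q w) + g z * r / (w - z)"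
    using f'(2) eventually_neq_at_within[of z z UNIV] by eventually_elim (simp add: split)
  moreover have "(\<lambda>w. g w * f' w + r * q w) analytic_on {z}"
    by (intro analytic_intros g f'(1) q)
  ultimately show ?thesis
    unfolding has_simple_pole_residue_def by blast
qed

lemma has_simple_pole_residue_inverse:
  assumes f: "f analytic_on {z}" and "f z = 0" and "deriv f z \<noteq> 0"
  shows "has_simple_pole_residue (\<lambda>w. 1 / f w) z (1 / deriv f z)"
proof -
  define q where "q w = (if w = z then deriv f z else (f w - f z) / (w - z))" for w
  have "(\<lambda>w. 1 / q w) analytic_on {z}"
    unfolding q_def using assms
    by (intro analytic_intros analytic_at_difference_quotient) auto
  from has_simple_pole_residue_mult[OF this has_simple_pole_residue_inverse_linear]
  have "has_simple_pole_residue (\<lambda>w. 1 / q w * (1 / (w - z))) z (1 / deriv f z)"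
    by (simp add: q_def)
  moreover have "\<forall>\<^sub>F w in at z. 1 / q w * (1 / (w - z)) = 1 / f w"
    using eventually_neq_at_within[of z z UNIV]
    by eventually_elim (simp add: q_def \<open>f z = 0\<close>)
  ultimately show ?thesis
    by (rule has_simple_pole_residue_cong)
qed

lemma remove_sings_analytic_at_residue_0:
  assumes "has_simple_pole_residue f z 0"
  shows "remove_sings f analytic_on {z}"
proof -
  obtain g where g: "g analytic_on {z}" and gf: "\<forall>\<^sub>F w in at z. g w = f w"
    using assms unfolding has_simple_pole_residue_def by (auto simp: eq_commute)
  have "isolated_singularity_at f z"
    using isolated_singularity_at_analytic[OF g] gf by (rule isolated_singularity_at_transform)
  moreover have "f \<midarrow>z\<rightarrow> g z"
    using analytic_at_imp_isCont[OF g] gf by (auto simp: isCont_def intro: Lim_transform_eventually)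
  ultimately show ?thesis
    by (rule remove_sings_analytic_at)
qed

section \<open>Cauchy transforms over the lattice\<close>

lemma holomorphic_on_infsum_cauchy_kernel:
  fixes c :: "complex \<Rightarrow> complex"
  assumes summable: "(\<lambda>x. norm (c x)) summable_on A" and "d > 0"
    and far: "\<And>x w. x \<in> A \<Longrightarrow> w \<in> cball z r \<Longrightarrow> d \<le> cmod (w - x)"
  shows "(\<lambda>w. \<Sum>\<^sub>\<infinity>x\<in>A. c x / (w - x)) holomorphic_on ball z r"
proof -
  have limit: "uniform_limit (cball z r) (\<lambda>X w. \<Sum>x\<in>X. c x / (w - x))
      (\<lambda>w. \<Sum>\<^sub>\<infinity>x\<in>A. c x / (w - x)) (finite_subsets_at_top A)"
  proof (rule Weierstrass_m_test_general[where M = "\<lambda>x. norm (c x) / d"])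
    show "norm (c x / (w - x)) \<le> norm (c x) / d" if "x \<in> A" "w \<in> cball z r" for x w
      using far[OF that] \<open>d > 0\<close> by (simp add: norm_divide frac_le)
    show "(\<lambda>x. norm (c x) / d) summable_on A"
      using summable_on_cmult_left[OF summable, of "1/d"] by simp
  qed
  have partial_sums: "\<forall>\<^sub>F X in finite_subsets_at_top A.
      continuous_on (cball z r) (\<lambda>w. \<Sum>x\<in>X. c x / (w - x)) \<and>
      (\<lambda>w. \<Sum>x\<in>X. c x / (w - x)) holomorphic_on ball z r"
  proof (rule eventually_finite_subsets_at_top_weakI)
    fix X assume "X \<subseteq> A"
    then have nonzero: "w - x \<noteq> 0" if "x \<in> X" "w \<in> cball z r" for x w
      using far[of x w] that \<open>d > 0\<close> by auto
    show "continuous_on (cball z r) (\<lambda>w. \<Sum>x\<in>X. c x / (w - x)) \<and>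
        (\<lambda>w. \<Sum>x\<in>X. c x / (w - x)) holomorphic_on ball z r"
    proof
      show "continuous_on (cball z r) (\<lambda>w. \<Sum>x\<in>X. c x / (w - x))"
        by (intro continuous_on_sum continuous_on_divide continuous_on_const continuous_on_diff
            continuous_on_id) (use nonzero in auto)
      show "(\<lambda>w. \<Sum>x\<in>X. c x / (w - x)) holomorphic_on ball z r"
        by (intro holomorphic_on_sum holomorphic_on_divide holomorphic_on_const holomorphic_on_diff
            holomorphic_on_id) (use nonzero in auto)
    qed
  qed
  show ?thesis
    by (rule holomorphic_uniform_limit[OF partial_sums limit]) (simp add: finite_subsets_at_top_neq_bot)
qed

lemma infsum_cauchy_kernel_split:
  fixes c :: "complex \<Rightarrow> complex"
  assumes summable: "(\<lambda>x. norm (c x)) summable_on A" and "x0 \<in> A" and "r > 0"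
    and far: "\<And>x w. x \<in> A - {x0} \<Longrightarrow> w \<in> cball z r \<Longrightarrow> r \<le> cmod (w - x)"
  shows "(\<lambda>w. \<Sum>\<^sub>\<infinity>x\<in>A - {x0}. c x / (w - x)) holomorphic_on ball z r"
    and "\<And>w. w \<in> cball z r \<Longrightarrow>
           (\<Sum>\<^sub>\<infinity>x\<in>A. c x / (w - x)) = c x0 / (w - x0) + (\<Sum>\<^sub>\<infinity>x\<in>A - {x0}. c x / (w - x))"
proof -
  have summable': "(\<lambda>x. norm (c x)) summable_on A - {x0}"
    using summable_on_subset_banach[OF summable] by blast
  show "(\<lambda>w. \<Sum>\<^sub>\<infinity>x\<in>A - {x0}. c x / (w - x)) holomorphic_on ball z r"
    using summable' \<open>r > 0\<close> far by (rule holomorphic_on_infsum_cauchy_kernel)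
  fix w assume w: "w \<in> cball z r"
  have "(\<lambda>x. norm (c x / (w - x))) summable_on A - {x0}"
  proof (rule summable_on_comparison_test)
    show "(\<lambda>x. norm (c x) / r) summable_on A - {x0}"
      using summable_on_cmult_left[OF summable', of "1/r"] by simp
    show "norm (c x / (w - x)) \<le> norm (c x) / r" if "x \<in> A - {x0}" for x
      using far[OF that w] \<open>r > 0\<close> by (simp add: norm_divide frac_le)
  qed simp
  then have "(\<lambda>x. c x / (w - x)) summable_on A - {x0}"
    by (rule abs_summable_summable)
  then have "(\<Sum>\<^sub>\<infinity>x\<in>insert x0 (A - {x0}). c x / (w - x))
      = c x0 / (w - x0) + (\<Sum>\<^sub>\<infinity>x\<in>A - {x0}. c x / (w - x))"
    by (rule infsum_insert) simp
  moreover have "insert x0 (A - {x0}) = A"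
    using \<open>x0 \<in> A\<close> by blast
  ultimately show "(\<Sum>\<^sub>\<infinity>x\<in>A. c x / (w - x)) = c x0 / (w - x0) + (\<Sum>\<^sub>\<infinity>x\<in>A - {x0}. c x / (w - x))"
    by simp
qed

lemma summable_on_norm_weight_mult:
  fixes w p :: "'a \<Rightarrow> complex"
  assumes "w summable_on A" and "(\<lambda>x. p x * p x * w x) summable_on A"
  shows "(\<lambda>x. norm (w x * p x)) summable_on A"
proof (rule summable_on_comparison_test)
  show "(\<lambda>x. norm (w x) + norm (p x * p x * w x)) summable_on A"
    using assms by (intro summable_on_add) (simp_all add: summable_on_iff_abs_summable_on_complex)
  show "norm (w x * p x) \<le> norm (w x) + norm (p x * p x * w x)" for x
  proof -
    have "2 * norm (p x) \<le> 1 + norm (p x) * norm (p x)"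
      using sum_squares_ge_zero[of "norm (p x) - 1" 0] by (simp add: algebra_simps)
    then have "norm (p x) \<le> 1 + norm (p x) * norm (p x)"
      using norm_ge_zero[of "p x"] by linarith
    then have "norm (w x) * norm (p x) \<le> norm (w x) * (1 + norm (p x) * norm (p x))"
      by (simp add: mult_left_mono)
    then show ?thesis
      by (simp add: norm_mult algebra_simps)
  qed
qed simp

lemma open_strip: "open (strip e)"
proof -
  have "strip e = {z. Im z < e} \<inter> {z. Im z > -e}"
    by (auto simp: strip_def)
  then show ?thesis
    by (simp add: open_halfspace_Im_lt open_halfspace_Im_gt open_Int)
qed

lemma latN_nearest:
  assumes "N \<ge> 1"
  shows "\<exists>x0\<in>latN N. \<forall>x\<in>latN N - {x0}. \<forall>w\<in>cball z (1 / (4 * real N)).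
            1 / (4 * real N) \<le> cmod (w - x)"
proof -
  define k where "k = round (real N * Re z)"
  have N: "real N > 0" using assms by simp
  have "1 / (4 * real N) \<le> cmod (w - x)"
    if x: "x \<in> latN N - {of_int k / of_nat N}" and w: "w \<in> cball z (1 / (4 * real N))" for x w
  proof -
    obtain j :: int where j: "x = of_int j / of_nat N" and "j \<noteq> k"
      using x by (auto simp: latN_def)
    have "\<bar>real N * Re z - k\<bar> \<le> \<bar>real N * Re z - j\<bar>"
      unfolding k_def by (rule round_diff_minimal)
    moreover have "1 \<le> \<bar>real_of_int j - real_of_int k\<bar>"
      using \<open>j \<noteq> k\<close> by linarith
    ultimately have "1 / 2 \<le> \<bar>real N * Re z - j\<bar>"
      by linarith
    also have "\<dots> = \<bar>real N * (Re z - j / real N)\<bar>"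
      using N by (simp add: right_diff_distrib)
    also have "\<dots> = real N * \<bar>Re z - j / real N\<bar>"
      by (simp add: abs_mult)
    finally have far: "1 / (2 * real N) \<le> \<bar>Re z - j / real N\<bar>"
      using N by (simp add: field_simps)
    have "\<bar>Re w - Re z\<bar> \<le> 1 / (4 * real N)"
      using abs_Re_le_cmod[of "w - z"] w by (simp add: dist_norm norm_minus_commute)
    moreover have "\<bar>Re w - j / real N\<bar> \<le> cmod (w - x)"
      using abs_Re_le_cmod[of "w - x"] j by simp
    ultimately show ?thesis
      using far by linarith
  qed
  moreover have "of_int k / of_nat N \<in> latN N"
    by (auto simp: latN_def)
  ultimately show ?thesis
    by blast
qed

lemma eventually_not_in_latN:
  assumes "N \<ge> 1"
  shows "\<forall>\<^sub>F w in at z. w \<notin> latN N"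
proof -
  obtain x0 where "x0 \<in> latN N"
    and far: "\<forall>x\<in>latN N - {x0}. \<forall>w\<in>cball z (1 / (4 * real N)). 1 / (4 * real N) \<le> cmod (w - x)"
    using latN_nearest[OF assms] by blast
  have "\<forall>\<^sub>F w in at z. w \<in> ball z (1 / (4 * real N))"
    using assms by (intro eventually_at_in_open') auto
  moreover have "\<forall>\<^sub>F w in at z. w \<noteq> x0"
    by (rule eventually_neq_at_within)
  ultimately show ?thesis
  proof eventually_elim
    case (elim w)
    then show ?case
      using far[rule_format, of w w] by auto
  qed
qed

lemma cauchy_tr_analytic_off_latN:
  assumes "N \<ge> 1" "(\<lambda>x. norm (c x)) summable_on latN N" "z \<notin> latN N"
  shows "cauchy_tr N c analytic_on {z}"
proof -
  define r where "r = 1 / (4 * real N)"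
  obtain x0 where x0: "x0 \<in> latN N"
    and far: "\<forall>x\<in>latN N - {x0}. \<forall>w\<in>cball z r. r \<le> cmod (w - x)"
    using latN_nearest[OF assms(1)] unfolding r_def by blast
  have r: "r > 0" using assms(1) by (simp add: r_def)
  note split = infsum_cauchy_kernel_split[OF assms(2) x0 r, of z]
  have "(\<lambda>w. c x0 / (w - x0) + (\<Sum>\<^sub>\<infinity>x\<in>latN N - {x0}. c x / (w - x))) holomorphic_on ball z r - {x0}"
    using split(1) far by (auto intro!: holomorphic_intros intro: holomorphic_on_subset)
  then have "cauchy_tr N c holomorphic_on ball z r - {x0}"
    by (rule holomorphic_transform) (use split(2) far in \<open>auto simp: cauchy_tr_def\<close>)
  moreover have "z \<noteq> x0" using assms(3) x0 by auto
  ultimately show ?thesis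
    using r by (intro holomorphic_on_imp_analytic_at[of _ "ball z r - {x0}"]) auto
qed

lemma cauchy_tr_has_simple_pole_residue:
  assumes "N \<ge> 1" "(\<lambda>x. norm (c x)) summable_on latN N" "x0 \<in> latN N"
  shows "has_simple_pole_residue (cauchy_tr N c) x0 (c x0)"
proof -
  define r where "r = 1 / (4 * real N)"
  have r: "r > 0" using assms(1) by (simp add: r_def)
  obtain x1 where x1: "x1 \<in> latN N"
    and far: "\<forall>x\<in>latN N - {x1}. \<forall>w\<in>cball x0 r. r \<le> cmod (w - x)"
    using latN_nearest[OF assms(1)] unfolding r_def by blast
  have "x1 = x0"
  proof (rule ccontr)
    assume "x1 \<noteq> x0"
    moreover have "x0 \<in> cball x0 r"
      using r by simp
    ultimately have "r \<le> cmod (x0 - x0)"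
      using far assms(3) by blast
    then show False
      using r by simp
  qed
  note split = infsum_cauchy_kernel_split[OF assms(2) assms(3) r, of x0]
  have "(\<lambda>w. \<Sum>\<^sub>\<infinity>x\<in>latN N - {x0}. c x / (w - x)) analytic_on {x0}"
    using split(1) far r \<open>x1 = x0\<close> by (intro holomorphic_on_imp_analytic_at[of _ "ball x0 r"]) auto
  moreover have "\<forall>\<^sub>F w in at x0. cauchy_tr N c w
      = (\<Sum>\<^sub>\<infinity>x\<in>latN N - {x0}. c x / (w - x)) + c x0 / (w - x0)"
    using eventually_at_in_open'[of "ball x0 r" x0] r split(2) far \<open>x1 = x0\<close>
    by (auto simp: cauchy_tr_def elim!: eventually_mono)
  ultimately show ?thesis
    unfolding has_simple_pole_residue_def by blast
qed

lemma cauchy_tr_divide_const: "cauchy_tr N f z / c = cauchy_tr N (\<lambda>x. f x / c) z"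
  unfolding cauchy_tr_def using infsum_cmult_left'[of "\<lambda>x. f x / (z - x)" "inverse c" "latN N"]
  by (simp add: divide_inverse ac_simps)

section \<open>The function \<open>\<Pi>\<close> and the matrices \<open>D\<close>\<close>

lemma PiN_eq_0_iff:
  assumes "N \<ge> 1"
  shows "PiN N z = 0 \<longleftrightarrow> z \<in> latN N"
proof -
  have Npi: "of_nat N * of_real pi \<noteq> (0::complex)" using assms by simp
  have "PiN N z = 0 \<longleftrightarrow> (\<exists>n::int. of_nat N * of_real pi * z = of_real (of_int n * pi))"
    using Npi by (simp add: PiN_def sin_eq_0)
  also have "\<dots> \<longleftrightarrow> (\<exists>n::int. z = of_int n / of_nat N)"
    using Npi by (auto simp: field_simps)
  finally show ?thesis by (simp add: latN_def)
qed

lemma PiN_has_field_derivative: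
  assumes "N \<ge> 1"
  shows "(PiN N has_field_derivative cos (of_nat N * of_real pi * z)) (at z)"
  unfolding PiN_def[abs_def] using assms by (auto intro!: derivative_eq_intros)

lemma analytic_on_PiN [analytic_intros]: "PiN N analytic_on A"
  unfolding PiN_def[abs_def] divide_inverse by (intro analytic_intros)

lemma sin_latN:
  assumes "N \<ge> 1" "x0 \<in> latN N"
  shows "sin (of_nat N * of_real pi * x0) = 0"
  using PiN_eq_0_iff[OF assms(1), of x0] assms by (simp add: PiN_def)

lemma cos_latN_squared:
  assumes "N \<ge> 1" "x0 \<in> latN N"
  shows "cos (of_nat N * of_real pi * x0) ^ 2 = 1"
  using sin_latN[OF assms] sin_cos_squared_add[of "of_nat N * of_real pi * x0"] by simp

lemma exp_latN:
  assumes "N \<ge> 1" "x0 \<in> latN N" "\<sigma> \<in> {1, -1}"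
  shows "exp (of_real \<sigma> * \<i> * of_nat N * of_real pi * x0) = cos (of_nat N * of_real pi * x0)"
  using assms(3) sin_latN[OF assms(1,2)]
    exp_Euler[of "of_nat N * of_real pi * x0"] exp_minus_Euler[of "of_nat N * of_real pi * x0"]
  by (auto simp: mult.assoc)

lemma PiN_inverse_has_simple_pole_residue:
  assumes "N \<ge> 1" "x0 \<in> latN N"
  shows "has_simple_pole_residue (\<lambda>z. 1 / PiN N z) x0 (cos (of_nat N * of_real pi * x0))"
proof -
  let ?s = "cos (of_nat N * of_real pi * x0)"
  have "deriv (PiN N) x0 = ?s"
    by (rule DERIV_imp_deriv[OF PiN_has_field_derivative[OF assms(1)]])
  moreover have "1 / ?s = ?s"
    using cos_latN_squared[OF assms] by (simp add: power2_eq_square divide_eq_eq)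
  moreover have "?s \<noteq> 0" "PiN N x0 = 0"
    using cos_latN_squared[OF assms] PiN_eq_0_iff[OF assms(1)] assms(2) by auto
  ultimately show ?thesis
    using has_simple_pole_residue_inverse[of "PiN N" x0] analytic_on_PiN by metis
qed

lemma wN_nonzero [simp]: "wN N V z \<noteq> 0"
  by (simp add: wN_def)

lemma analytic_on_wN [analytic_intros]:
  "V analytic_on A \<Longrightarrow> wN N V analytic_on A"
  unfolding wN_def[abs_def] by (intro analytic_intros)

lemma Du_analytic_off_latN:
  assumes "N \<ge> 1" "z \<notin> latN N" "V analytic_on {z}"
  shows "(\<lambda>w. Du N V \<sigma> w $ i $ j) analytic_on {z}"
proof -
  have "PiN N z \<noteq> 0"
    using PiN_eq_0_iff assms(1,2) by blast
  then show ?thesis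
    using assms(3) by (cases "i = 1"; cases "j = 1") (auto simp: Du_def mat2_nth intro!: analytic_intros)
qed

lemma Dl_analytic_off_latN:
  assumes "N \<ge> 1" "z \<notin> latN N" "V analytic_on {z}"
  shows "(\<lambda>w. Dl N V \<sigma> w $ i $ j) analytic_on {z}"
proof -
  have "PiN N z \<noteq> 0"
    using PiN_eq_0_iff assms(1,2) by blast
  then show ?thesis
    using assms(3) by (cases "i = 1"; cases "j = 1") (auto simp: Dl_def mat2_nth intro!: analytic_intros)
qed

lemma Du_row_residue_0:
  assumes N: "N \<ge> 1" and x0: "x0 \<in> latN N" and \<sigma>: "\<sigma> \<in> {1, -1}"
    and \<alpha>: "\<alpha> analytic_on {x0}" and V: "V analytic_on {x0}"
    and summable: "(\<lambda>x. norm (wN N V x * \<alpha> x)) summable_on latN N"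
  shows "has_simple_pole_residue
           (\<lambda>z. \<alpha> z * Du N V \<sigma> z $ 1 $ j + cauchy_tr N (\<lambda>x. wN N V x * \<alpha> x) z * Du N V \<sigma> z $ 2 $ j)
           x0 0"
proof (cases "j = 1")
  case True
  then show ?thesis
    using \<alpha> by (simp add: Du_def mat2_nth analytic_imp_has_simple_pole_residue)
next
  case False
  let ?w = "wN N V" and ?e = "\<lambda>z. exp (of_real \<sigma> * \<i> * of_nat N * of_real pi * z)"
    and ?s = "cos (of_nat N * of_real pi * x0)" and ?C = "cauchy_tr N (\<lambda>x. wN N V x * \<alpha> x)"
  have entry: "(\<lambda>z. \<alpha> z * Du N V \<sigma> z $ 1 $ j + ?C z * Du N V \<sigma> z $ 2 $ j)
      = (\<lambda>z. (- (\<alpha> z * ?w z * ?e z)) * (1 / PiN N z) + ?C z)"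
    using False by (simp add: Du_def mat2_nth fun_eq_iff)
  have residue: "has_simple_pole_residue (\<lambda>z. (- (\<alpha> z * ?w z * ?e z)) * (1 / PiN N z) + ?C z)
          x0 (- (\<alpha> x0 * ?w x0 * ?e x0) * ?s + ?w x0 * \<alpha> x0)"
    using \<alpha> V
    by (intro has_simple_pole_residue_add has_simple_pole_residue_mult analytic_intros
        PiN_inverse_has_simple_pole_residue cauchy_tr_has_simple_pole_residue N x0 summable)
  have vanishes: "- (\<alpha> x0 * ?w x0 * ?e x0) * ?s + ?w x0 * \<alpha> x0 = 0"
    using exp_latN[OF N x0 \<sigma>] cos_latN_squared[OF N x0] by (simp add: power2_eq_square)
  show ?thesis
    unfolding entry using residue by (simp only: vanishes)
qed

lemma Dl_row_residue_0:
  assumes N: "N \<ge> 1" and x0: "x0 \<in> latN N" and \<sigma>: "\<sigma> \<in> {1, -1}"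
    and \<alpha>: "\<alpha> analytic_on {x0}" and V: "V analytic_on {x0}"
    and summable: "(\<lambda>x. norm (wN N V x * \<alpha> x)) summable_on latN N"
  shows "has_simple_pole_residue
           (\<lambda>z. \<alpha> z * Dl N V \<sigma> z $ 1 $ j + cauchy_tr N (\<lambda>x. wN N V x * \<alpha> x) z * Dl N V \<sigma> z $ 2 $ j)
           x0 0"
proof -
  let ?w = "wN N V" and ?e = "\<lambda>z. exp (of_real \<sigma> * \<i> * of_nat N * of_real pi * z)"
    and ?s = "cos (of_nat N * of_real pi * x0)" and ?C = "cauchy_tr N (\<lambda>x. wN N V x * \<alpha> x)"
  have C: "has_simple_pole_residue ?C x0 (?w x0 * \<alpha> x0)"
    using N summable x0 by (rule cauchy_tr_has_simple_pole_residue)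
  show ?thesis
  proof (cases "j = 1")
    case True
    have entry: "(\<lambda>z. \<alpha> z * Dl N V \<sigma> z $ 1 $ j + ?C z * Dl N V \<sigma> z $ 2 $ j)
        = (\<lambda>z. \<alpha> z * (1 / PiN N z) + (- (?e z / ?w z)) * ?C z)"
      using True by (simp add: Dl_def mat2_nth fun_eq_iff)
    have residue: "has_simple_pole_residue (\<lambda>z. \<alpha> z * (1 / PiN N z) + (- (?e z / ?w z)) * ?C z)
            x0 (\<alpha> x0 * ?s + (- (?e x0 / ?w x0)) * (?w x0 * \<alpha> x0))"
      using \<alpha> V
      by (intro has_simple_pole_residue_add has_simple_pole_residue_mult analytic_intros
          PiN_inverse_has_simple_pole_residue C N x0) simp_all
    have vanishes: "\<alpha> x0 * ?s + (- (?e x0 / ?w x0)) * (?w x0 * \<alpha> x0) = 0"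
      using exp_latN[OF N x0 \<sigma>] by simp
    show ?thesis
      unfolding entry using residue by (simp only: vanishes)
  next
    case False
    have entry: "(\<lambda>z. \<alpha> z * Dl N V \<sigma> z $ 1 $ j + ?C z * Dl N V \<sigma> z $ 2 $ j)
        = (\<lambda>z. PiN N z * ?C z)"
      using False by (simp add: Dl_def mat2_nth fun_eq_iff)
    have "PiN N x0 = 0"
      using PiN_eq_0_iff N x0 by blast
    then show ?thesis
      unfolding entry using has_simple_pole_residue_mult[OF analytic_on_PiN[of N "{x0}"] C] by simp
  qed
qed

lemma exp_i_minus_exp_minus_i:
  "exp (of_real 1 * \<i> * of_nat N * of_real pi * z) - exp (of_real (-1) * \<i> * of_nat N * of_real pi * z)
     = 2 * \<i> * sin (of_nat N * of_real pi * z)"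
  using sin_exp_eq[of "of_nat N * of_real pi * z"] by (simp add: field_simps mult.assoc)

lemma Du_jump:
  assumes "N \<ge> 1" "z \<notin> latN N"
  shows "Du N V 1 z = Du N V (-1) z ** mat2 1 (- 2 * of_nat N * of_real pi * \<i> * wN N V z) 0 1"
proof -
  let ?e = "\<lambda>\<sigma>. exp (of_real \<sigma> * \<i> * of_nat N * of_real pi * z)"
    and ?u = "of_nat N * of_real pi * z"
  have "sin ?u \<noteq> 0" "of_nat N * of_real pi \<noteq> (0::complex)"
    using PiN_eq_0_iff[of N z] assms by (auto simp: PiN_def)
  then have "wN N V z / PiN N z * (?e 1 - ?e (-1)) = 2 * of_nat N * of_real pi * \<i> * wN N V z"
    unfolding exp_i_minus_exp_minus_i PiN_def by (simp add: field_simps)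
  then have "- (wN N V z / PiN N z) * ?e 1
      = - 2 * of_nat N * of_real pi * \<i> * wN N V z + - (wN N V z / PiN N z) * ?e (-1)"
    by (simp add: algebra_simps)
  then show ?thesis
    unfolding Du_def mat2_mult by simp
qed

lemma Dl_jump:
  assumes "N \<ge> 1"
  shows "Dl N V 1 z = Dl N V (-1) z ** mat2 1 0 (- 2 * of_nat N * of_real pi * \<i> / wN N V z) 1"
proof -
  let ?e = "\<lambda>\<sigma>. exp (of_real \<sigma> * \<i> * of_nat N * of_real pi * z)"
  have "of_nat N * of_real pi \<noteq> (0::complex)"
    using assms by simp
  then have "?e 1 - ?e (-1) = 2 * of_nat N * of_real pi * \<i> * PiN N z"
    unfolding exp_i_minus_exp_minus_i PiN_def by (simp add: field_simps)
  then have "- (1 / wN N V z) * ?e 1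
      = - (1 / wN N V z) * ?e (-1) + PiN N z * (- 2 * of_nat N * of_real pi * \<i> / wN N V z)"
    by (simp add: field_simps)
  then show ?thesis
    unfolding Dl_def mat2_mult by simp
qed

section \<open>Removable singularities of matrix-valued functions\<close>

definition mat_remove_sings :: "(complex \<Rightarrow> complex^2^2) \<Rightarrow> complex \<Rightarrow> complex^2^2" where
  "mat_remove_sings M z = (\<chi> i j. remove_sings (\<lambda>w. M w $ i $ j) z)"

lemma mat_holomorphic_on_mat_remove_sings:
  assumes "open S" and "\<And>z i j. z \<in> S \<Longrightarrow> has_simple_pole_residue (\<lambda>w. M w $ i $ j) z 0"
  shows "mat_holomorphic_on (mat_remove_sings M) S"
  unfolding mat_holomorphic_on_def mat_remove_sings_def vec_lambda_beta
proof (intro allI)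
  fix i j
  have "remove_sings (\<lambda>w. M w $ i $ j) analytic_on S"
    using assms(2) by (subst analytic_on_analytic_at) (blast intro: remove_sings_analytic_at_residue_0)
  then show "remove_sings (\<lambda>w. M w $ i $ j) holomorphic_on S"
    by (rule analytic_imp_holomorphic)
qed

lemma mat_remove_sings_eq:
  "(\<And>i j. (\<lambda>w. M w $ i $ j) analytic_on {z}) \<Longrightarrow> mat_remove_sings M z = M z"
  by (simp add: mat_remove_sings_def vec_eq_iff)

lemma eq_mat_mult_of_eventually:
  assumes S: "open S" "z \<in> S" and A: "mat_holomorphic_on A S" and B: "mat_holomorphic_on B S"
    and C: "\<And>i j. continuous_on S (\<lambda>w. C w $ i $ j)"
    and eq: "\<forall>\<^sub>F w in at z. A w = B w ** C w"
  shows "A z = B z ** C z"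
  unfolding vec_eq_iff
proof (intro allI)
  fix i j
  have "continuous_on S (\<lambda>w. A w $ i $ j)"
    using A unfolding mat_holomorphic_on_def by (blast intro: holomorphic_on_imp_continuous_on)
  then have lhs: "isCont (\<lambda>w. A w $ i $ j) z"
    using S continuous_on_eq_continuous_at by blast
  have "continuous_on S (\<lambda>w. B w $ i $ k)" for k
    using B unfolding mat_holomorphic_on_def by (blast intro: holomorphic_on_imp_continuous_on)
  then have "continuous_on S (\<lambda>w. (B w ** C w) $ i $ j)"
    unfolding matrix_matrix_mult_def vec_lambda_beta by (intro continuous_on_sum continuous_on_mult C)
  then have rhs: "isCont (\<lambda>w. (B w ** C w) $ i $ j) z"
    using S continuous_on_eq_continuous_at by blast
  have "\<forall>\<^sub>F w in at z. (B w ** C w) $ i $ j = A w $ i $ j"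
    using eq by eventually_elim simp
  then have "((\<lambda>w. A w $ i $ j) \<longlongrightarrow> (B z ** C z) $ i $ j) (at z)"
    using rhs unfolding isCont_def by (blast intro: Lim_transform_eventually)
  with lhs show "A z $ i $ j = (B z ** C z) $ i $ j"
    unfolding isCont_def by (rule tendsto_unique[OF at_neq_bot])
qed

section \<open>The matrices \<open>R^u\<close> and \<open>R^l\<close>\<close>

locale discrete_orthogonal_polynomials =
  fixes N :: nat and V :: "complex \<Rightarrow> complex" and \<epsilon>0 :: real
    and P :: "nat \<Rightarrow> real poly" and h :: "nat \<Rightarrow> real"
  assumes N_ge_1: "N \<ge> 1"
    and V_holomorphic: "V holomorphic_on strip \<epsilon>0"
    and monic: "\<forall>n. degree (P n) = n \<and> lead_coeff (P n) = 1"
    and orthogonal: "\<forall>m n. ((\<lambda>x. poly (cpoly (P m)) x * poly (cpoly (P n)) x * wN N V x)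
                       has_sum of_real (if m = n then h n else 0)) (latN N)"
begin

definition row_poly :: "2 \<Rightarrow> complex \<Rightarrow> complex" where
  "row_poly i = (if i = 1 then poly (cpoly (P N))
                 else (\<lambda>z. poly (cpoly (P (N - 1))) z / of_real (h (N - 1))))"

lemma bigP_mult_nth:
  "(bigP N V P h z ** M) $ i $ j
     = row_poly i z * M $ 1 $ j + cauchy_tr N (\<lambda>x. wN N V x * row_poly i x) z * M $ 2 $ j"
  by (simp add: bigP_def mat2_mult_nth row_poly_def cauchy_tr_divide_const)

lemma analytic_on_row_poly [analytic_intros]: "row_poly i analytic_on A"
proof -
  have "(\<lambda>z. poly p z :: complex) holomorphic_on UNIV" for p
    by (intro holomorphic_intros)
  then have "(\<lambda>z. poly p z :: complex) analytic_on A" for p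
    using analytic_on_holomorphic by blast
  then show ?thesis
    unfolding row_poly_def divide_inverse by (auto intro!: analytic_intros)
qed

lemma summable_row_poly: "(\<lambda>x. norm (wN N V x * row_poly i x)) summable_on latN N"
proof -
  have "cpoly (P 0) = 1"
    using monic by (metis cpoly_def degree_0_id map_poly_1 of_real_1 one_pCons)
  moreover have "((\<lambda>x. poly (cpoly (P 0)) x * poly (cpoly (P 0)) x * wN N V x)
      has_sum of_real (h 0)) (latN N)"
    using orthogonal[rule_format, of 0 0] by simp
  ultimately have "wN N V summable_on latN N"
    unfolding summable_on_def by auto
  moreover have "(\<lambda>x. poly (cpoly (P n)) x * poly (cpoly (P n)) x * wN N V x) summable_on latN N" for n
    using orthogonal summable_on_def by blast
  ultimately have summable: "(\<lambda>x. norm (wN N V x * poly (cpoly (P n)) x)) summable_on latN N" for n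
    by (rule summable_on_norm_weight_mult)
  show ?thesis
    using summable summable_on_cmult_left[OF summable[of "N - 1"], of "1 / \<bar>h (N - 1)\<bar>"]
    by (simp add: row_poly_def norm_mult norm_divide)
qed

lemma V_analytic_on_strip: "z \<in> strip \<epsilon>0 \<Longrightarrow> V analytic_on {z}"
  using V_holomorphic open_strip holomorphic_on_imp_analytic_at by blast

lemma bigP_mult_analytic_off_latN:
  assumes "D \<in> {Du N V \<sigma>, Dl N V \<sigma>}" "z \<in> strip \<epsilon>0 - latN N"
  shows "(\<lambda>w. (bigP N V P h w ** D w) $ i $ j) analytic_on {z}"
proof -
  have "(\<lambda>w. D w $ k $ j) analytic_on {z}" for k
    using assms Du_analytic_off_latN Dl_analytic_off_latN N_ge_1 V_analytic_on_strip by blast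
  moreover have "cauchy_tr N (\<lambda>x. wN N V x * row_poly i x) analytic_on {z}"
    using N_ge_1 summable_row_poly assms(2) by (blast intro: cauchy_tr_analytic_off_latN)
  ultimately show ?thesis
    unfolding bigP_mult_nth by (intro analytic_intros)
qed

lemma bigP_mult_residue_0:
  assumes "D \<in> {Du N V \<sigma>, Dl N V \<sigma>}" "\<sigma> \<in> {1, -1}" "z \<in> strip \<epsilon>0"
  shows "has_simple_pole_residue (\<lambda>w. (bigP N V P h w ** D w) $ i $ j) z 0"
proof (cases "z \<in> latN N")
  case True
  note row = N_ge_1 True assms(2) analytic_on_row_poly V_analytic_on_strip[OF assms(3)] summable_row_poly
  from assms(1) show ?thesis
    unfolding bigP_mult_nth using Du_row_residue_0[OF row] Dl_row_residue_0[OF row] by blast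
next
  case False
  then show ?thesis
    using assms bigP_mult_analytic_off_latN analytic_imp_has_simple_pole_residue by blast
qed

lemma mat_remove_sings_bigP_mult:
  assumes "D \<in> {Du N V \<sigma>, Dl N V \<sigma>}" "\<sigma> \<in> {1, -1}"
  shows "mat_holomorphic_on (mat_remove_sings (\<lambda>z. bigP N V P h z ** D z)) (strip \<epsilon>0)"
    and "z \<in> strip \<epsilon>0 - latN N \<Longrightarrow>
           mat_remove_sings (\<lambda>z. bigP N V P h z ** D z) z = bigP N V P h z ** D z"
  using open_strip bigP_mult_residue_0[OF assms] bigP_mult_analytic_off_latN[OF assms(1)]
  by (blast intro: mat_holomorphic_on_mat_remove_sings mat_remove_sings_eq)+

lemma mat_remove_sings_bigP_mult_jump:
  assumes D: "D \<in> {Du N V 1, Dl N V 1}" and D': "D' \<in> {Du N V (-1), Dl N V (-1)}"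
    and J: "\<And>i j. continuous_on (strip \<epsilon>0) (\<lambda>z. J z $ i $ j)"
    and jump: "\<And>z. z \<in> strip \<epsilon>0 - latN N \<Longrightarrow> D z = D' z ** J z"
    and z: "z \<in> strip \<epsilon>0"
  shows "mat_remove_sings (\<lambda>z. bigP N V P h z ** D z) z
           = mat_remove_sings (\<lambda>z. bigP N V P h z ** D' z) z ** J z"
proof (rule eq_mat_mult_of_eventually[OF open_strip z _ _ J])
  show "mat_holomorphic_on (mat_remove_sings (\<lambda>z. bigP N V P h z ** D z)) (strip \<epsilon>0)"
    using D by (intro mat_remove_sings_bigP_mult(1)[of _ 1]) auto
  show "mat_holomorphic_on (mat_remove_sings (\<lambda>z. bigP N V P h z ** D' z)) (strip \<epsilon>0)"
    using D' by (intro mat_remove_sings_bigP_mult(1)[of _ "-1"]) auto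
  have "\<forall>\<^sub>F w in at z. w \<in> strip \<epsilon>0 - latN N"
    using eventually_at_in_open'[OF open_strip z] eventually_not_in_latN[OF N_ge_1]
    by eventually_elim simp
  then show "\<forall>\<^sub>F w in at z. mat_remove_sings (\<lambda>z. bigP N V P h z ** D z) w
      = mat_remove_sings (\<lambda>z. bigP N V P h z ** D' z) w ** J w"
  proof eventually_elim
    case (elim w)
    then show ?case
      using mat_remove_sings_bigP_mult(2)[of D 1 w] mat_remove_sings_bigP_mult(2)[of D' "-1" w] D D'
      by (simp add: jump matrix_mul_assoc)
  qed
qed

end

theorem proposition6p1:
  fixes V :: "complex \<Rightarrow> complex" and \<epsilon>0 :: real and N :: nat
    and P :: "nat \<Rightarrow> real poly" and h :: "nat \<Rightarrow> real"
  assumes eps: "\<epsilon>0 > 0"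
    and V_holo: "V holomorphic_on strip \<epsilon>0"
    and V_real: "\<forall>x::real. V (of_real x) \<in> \<real>"
    and V_growth: "filterlim (\<lambda>z. Re (V z) / ln ((cmod z)^2 + 1)) at_top
                     (inf at_infinity (principal (strip \<epsilon>0)))"
    and N_pos: "N \<ge> 1"
    and monic: "\<forall>n. degree (P n) = n \<and> lead_coeff (P n) = 1"
    and orth: "\<forall>m n. ((\<lambda>x. poly (cpoly (P m)) x * poly (cpoly (P n)) x * wN N V x)
                  has_sum of_real (if m = n then h n else 0)) (latN N)"
  shows "\<exists>Rup Rum Rlp Rlm.
     mat_holomorphic_on Rup (strip \<epsilon>0) \<and> mat_holomorphic_on Rum (strip \<epsilon>0) \<and>
     mat_holomorphic_on Rlp (strip \<epsilon>0) \<and> mat_holomorphic_on Rlm (strip \<epsilon>0) \<and>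
     (\<forall>z \<in> strip \<epsilon>0 - latN N. Im z \<ge> 0 \<longrightarrow>
        Rup z = bigP N V P h z ** Du N V 1 z \<and> Rlp z = bigP N V P h z ** Dl N V 1 z) \<and>
     (\<forall>z \<in> strip \<epsilon>0 - latN N. Im z \<le> 0 \<longrightarrow>
        Rum z = bigP N V P h z ** Du N V (-1) z \<and> Rlm z = bigP N V P h z ** Dl N V (-1) z) \<and>
     (\<forall>x::real.
        Rup (of_real x) = Rum (of_real x) **
          mat2 1 (- 2 * of_nat N * of_real pi * \<i> * wN N V (of_real x)) 0 1 \<and>
        Rlp (of_real x) = Rlm (of_real x) **
          mat2 1 0 (- 2 * of_nat N * of_real pi * \<i> / wN N V (of_real x)) 1)"
proof -
  interpret discrete_orthogonal_polynomials N V \<epsilon>0 P h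
    using N_pos V_holo monic orth by unfold_locales
  let ?R = "\<lambda>D. mat_remove_sings (\<lambda>z. bigP N V P h z ** D z)"
  have w: "continuous_on (strip \<epsilon>0) (wN N V)"
    using V_holo by (intro holomorphic_on_imp_continuous_on) (simp add: wN_def[abs_def] holomorphic_intros)
  have real: "of_real x \<in> strip \<epsilon>0" for x
    using eps by (simp add: strip_def)
  have Ru_jump: "?R (Du N V 1) (of_real x)
      = ?R (Du N V (-1)) (of_real x) ** mat2 1 (- 2 * of_nat N * of_real pi * \<i> * wN N V (of_real x)) 0 1"
    for x
  proof (rule mat_remove_sings_bigP_mult_jump[OF _ _ _ Du_jump[OF N_pos] real])
    show "continuous_on (strip \<epsilon>0)
        (\<lambda>z. mat2 1 (- 2 * of_nat N * of_real pi * \<i> * wN N V z) 0 1 $ i $ j)" for i j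
      by (intro continuous_on_mat2_nth continuous_intros w)
  qed auto
  have Rl_jump: "?R (Dl N V 1) (of_real x)
      = ?R (Dl N V (-1)) (of_real x) ** mat2 1 0 (- 2 * of_nat N * of_real pi * \<i> / wN N V (of_real x)) 1"
    for x
  proof (rule mat_remove_sings_bigP_mult_jump[OF _ _ _ Dl_jump[OF N_pos] real])
    show "continuous_on (strip \<epsilon>0)
        (\<lambda>z. mat2 1 0 (- 2 * of_nat N * of_real pi * \<i> / wN N V z) 1 $ i $ j)" for i j
      by (intro continuous_on_mat2_nth continuous_intros w) auto
  qed auto
  show ?thesis
    using mat_remove_sings_bigP_mult[of "Du N V 1" 1] mat_remove_sings_bigP_mult[of "Du N V (-1)" "-1"]
      mat_remove_sings_bigP_mult[of "Dl N V 1" 1] mat_remove_sings_bigP_mult[of "Dl N V (-1)" "-1"]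
      Ru_jump Rl_jump
    by (intro exI[of _ "?R (Du N V 1)"] exI[of _ "?R (Du N V (-1))"]
        exI[of _ "?R (Dl N V 1)"] exI[of _ "?R (Dl N V (-1))"]) auto
qed

end
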